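(* Let $p\ge 2$, let $F$ be a distribution on $\mathbb{R}^p$, let $X\sim F$, let $X_1,X_2,\ldots$ be independent random vectors with distribution $F$, let $\mathbb{X}_n=(X_1,\ldots,X_n)^T$, and let $t\in\mathbb{R}^p$. Suppose there is an $\alpha\ge 0$ such that (I) $E\,|X-t|^{-1/(1+\alpha)}<\infty$, and (II) there is a sequence $(t_n)_{n\in\mathbb{N}}$ of random $p$-vectors (defined on the same probability space as the $X_i$) satisfying $n^\alpha|t_n-t|\le T_n$ almost surely, where $(T_n)_{n\in\mathbb{N}}$ is a sequence of random variables that converges almost surely (if $\alpha>0$) or converges almost surely to $0$ (if $\alpha=0$). Then $S_n(\mathbb{X}_n,t_n)\to S(F,t)$ almost surely as $n\to\infty$. Moreover, if condition (I) holds and, instead of (II), $(t_n)$ is a sequence of random $p$-vectors such that $n^\alpha|t_n-t|$ is bounded in probability (if $\alpha>0$) or converges in probability to $0$ (if $\alpha=0$), then $S_n(\mathbb{X}_n,t_n)\to S(F,t)$ in probability.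
   Context: $|\cdot|$ denotes the Euclidean norm on $\mathbb{R}^p$. The spatial sign of $x\in\mathbb{R}^p$ is $s(x)=x/|x|$ for $x\neq 0$ and $s(0)=0$. For a distribution $F$ on $\mathbb{R}^p$ with $X\sim F$ and $t\in\mathbb{R}^p$, the spatial sign covariance matrix is $S(F,t)=E\{s(X-t)s(X-t)^T\}$. For the sample $\mathbb{X}_n=(X_1,\ldots,X_n)^T$ and a (possibly random) $u\in\mathbb{R}^p$, $S_n(\mathbb{X}_n,u)=\frac1n\sum_{i=1}^n s(X_i-u)s(X_i-u)^T$. *)

theory Defs
  imports "HOL-Probability.Probability"
begin

text \<open>Spatial sign: s(x) = x/|x| for x \<noteq> 0, s(0) = 0. This is exactly the library's sgn
  on a real normed vector space (sgn x = x /R norm x, sgn 0 = 0).\<close>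
definition spatial_sign :: "real^'p \<Rightarrow> real^'p" where
  "spatial_sign x = (if x = 0 then 0 else x /\<^sub>R norm x)"

definition outer :: "real^'p \<Rightarrow> real^'p \<Rightarrow> real^'p^'p" where
  "outer v w = (\<chi> i j. v $ i * w $ j)"

definition SSCM :: "(real^'p) measure \<Rightarrow> real^'p \<Rightarrow> real^'p^'p" where
  "SSCM F t = (\<integral>x. outer (spatial_sign (x - t)) (spatial_sign (x - t)) \<partial>F)"

text \<open>Empirical SSCM S_n(X_n,u) = (1/n) sum_{i=1}^n s(X_i-u) s(X_i-u)^T;
  the sample X_1,...,X_n is represented by X 0, ..., X (n-1).\<close>
definition SSCM_n :: "(nat \<Rightarrow> real^'p) \<Rightarrow> nat \<Rightarrow> real^'p \<Rightarrow> real^'p^'p" where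
  "SSCM_n X n u = (1 / real n) *\<^sub>R (\<Sum>i<n. outer (spatial_sign (X i - u)) (spatial_sign (X i - u)))"

definition conv_in_prob :: "'a measure \<Rightarrow> (nat \<Rightarrow> 'a \<Rightarrow> 'b::metric_space) \<Rightarrow> ('a \<Rightarrow> 'b) \<Rightarrow> bool" where
  "conv_in_prob M Y L \<longleftrightarrow>
     (\<forall>e>0. (\<lambda>n. measure M {\<omega> \<in> space M. dist (Y n \<omega>) (L \<omega>) > e}) \<longlonglongrightarrow> 0)"

definition bounded_in_prob :: "'a measure \<Rightarrow> (nat \<Rightarrow> 'a \<Rightarrow> real) \<Rightarrow> bool" where
  "bounded_in_prob M Y \<longleftrightarrow>
     (\<forall>e>0. \<exists>K. \<forall>n. measure M {\<omega> \<in> space M. \<bar>Y n \<omega>\<bar> > K} \<le> e)"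

end

theory Submission
  imports Defs
begin

text \<open>For the fixed centre \<open>t\<close> the empirical SSCM is an average of bounded i.i.d. matrices
  \<open>s(X\<^sub>i - t) s(X\<^sub>i - t)\<^sup>T\<close>, so it converges almost surely by the strong law of large
  numbers, which for bounded variables follows from Hoeffding's inequality and Borel-Cantelli.
  Moving the centre to some \<open>u\<close> with \<open>|u - t| \<le> \<delta>\<close> changes the \<open>i\<close>-th summand by at most
  \<open>min 4 (4\<delta> / |X\<^sub>i - t|)\<close>. By the strong law again the average of these moduli tends to
  their mean, and this mean tends to \<open>0\<close> as \<open>\<delta> \<rightarrow> 0\<close> by dominated convergence, since \<open>F\<close>
  has no atom at \<open>t\<close>. Hence any estimator \<open>t\<^sub>n\<close> converging to \<open>t\<close> almost surely or in
  probability can be substituted for \<open>t\<close>, and condition (II) implies exactly such convergence.\<close>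

lemma tendsto_of_eventually_dist_less_inverse_Suc:
  assumes "\<And>k. eventually (\<lambda>n. dist (f n) l < inverse (real (Suc k))) F"
  shows "(f \<longlongrightarrow> l) F"
proof (rule tendstoI)
  fix e :: real assume "e > 0"
  then obtain k where "inverse (real (Suc k)) < e"
    using reals_Archimedean by blast
  with assms[of k] show "eventually (\<lambda>n. dist (f n) l < e) F"
    by (auto elim: eventually_mono)
qed

lemma (in prob_space) Hoeffding_bounded_iid_geometric:
  fixes Z :: "nat \<Rightarrow> 'a \<Rightarrow> real"
  assumes indep: "indep_vars (\<lambda>_. borel) Z UNIV"
    and ident: "\<And>i. distr M borel (Z i) = distr M borel (Z 0)"
    and bounded: "\<And>i \<omega>. \<omega> \<in> space M \<Longrightarrow> \<bar>Z i \<omega>\<bar> \<le> B"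
    and e: "e > 0"
  defines "q \<equiv> exp (- e\<^sup>2 / (2 * (\<bar>B\<bar> + 1)\<^sup>2))"
  shows "prob {\<omega> \<in> space M. \<bar>(\<Sum>i<n. Z i \<omega>) / real n - expectation (Z 0)\<bar> \<ge> e}
           \<le> 2 * q ^ n"
proof (cases "n = 0")
  case True
  have "prob {\<omega> \<in> space M. \<bar>(\<Sum>i<n. Z i \<omega>) / real n - expectation (Z 0)\<bar> \<ge> e} \<le> 1"
    by (rule prob_le_1)
  also have "\<dots> \<le> 2 * q ^ n"
    using True by simp
  finally show ?thesis .
next
  case False
  define b where "b = \<bar>B\<bar> + 1"
  have "b > 0"
    by (simp add: b_def)
  have "{..<n} \<noteq> {}"
    using False by (simp add: lessThan_empty_iff)
  interpret Hoeffding_ineq_iid M "{..<n}" Z "Z 0" "- b" b "expectation (Z 0)"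
  proof unfold_locales
    show "AE x in M. Z 0 x \<in> {- b..b}"
    proof (rule AE_I2)
      fix x assume "x \<in> space M"
      with bounded[of x 0] show "Z 0 x \<in> {- b..b}"
        by (auto simp: b_def)
    qed
    show "indep_vars (\<lambda>_. borel) Z {..<n}"
      by (rule indep_vars_subset[OF indep]) auto
    show "random_variable borel (Z 0)"
      using indep by (simp add: indep_vars_def)
    show "distr M borel (Z i) = distr M borel (Z 0)" for i
      by (rule ident)
  qed (simp, rule reflexive)
  have "prob {\<omega> \<in> space M. \<bar>(\<Sum>i<n. Z i \<omega>) / real n - expectation (Z 0)\<bar> \<ge> e}
      \<le> 2 * exp (- 2 * real (card {..<n}) * e\<^sup>2 / (b - - b)\<^sup>2)"
    using Hoeffding_ineq_abs_ge'[OF less_imp_le[OF e] _ \<open>{..<n} \<noteq> {}\<close>]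
      \<open>b > 0\<close> by (simp only: card_lessThan)
  also have "- 2 * real (card {..<n}) * e\<^sup>2 / (b - - b)\<^sup>2 = real n * (- e\<^sup>2 / (2 * b\<^sup>2))"
    by (simp add: power2_eq_square field_simps)
  also have "2 * exp (real n * (- e\<^sup>2 / (2 * b\<^sup>2))) = 2 * q ^ n"
    by (simp only: q_def b_def exp_of_nat_mult)
  finally show ?thesis .
qed

lemma (in prob_space) strong_law_bounded_iid:
  fixes Z :: "nat \<Rightarrow> 'a \<Rightarrow> real"
  assumes indep: "indep_vars (\<lambda>_. borel) Z UNIV"
    and ident: "\<And>i. distr M borel (Z i) = distr M borel (Z 0)"
    and bounded: "\<And>i \<omega>. \<omega> \<in> space M \<Longrightarrow> \<bar>Z i \<omega>\<bar> \<le> B"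
  shows "AE \<omega> in M. (\<lambda>n. (\<Sum>i<n. Z i \<omega>) / real n) \<longlonglongrightarrow> expectation (Z 0)"
proof -
  have [measurable]: "Z i \<in> borel_measurable M" for i
    using indep by (simp add: indep_vars_def)
  have eventually_close:
    "AE \<omega> in M. eventually (\<lambda>n. dist ((\<Sum>i<n. Z i \<omega>) / real n) (expectation (Z 0)) < e) sequentially"
    if e: "e > 0" for e
  proof -
    define q where "q = exp (- e\<^sup>2 / (2 * (\<bar>B\<bar> + 1)\<^sup>2))"
    define A where "A n = {\<omega> \<in> space M. \<bar>(\<Sum>i<n. Z i \<omega>) / real n - expectation (Z 0)\<bar> \<ge> e}" for n
    have A [measurable]: "A n \<in> events" for n
      unfolding A_def by measurable
    have "0 < q" "q < 1"
      using e by (simp_all add: q_def)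
    then have "summable (\<lambda>n. 2 * q ^ n)"
      by (intro summable_mult summable_geometric) simp
    moreover have "norm (measure M (A n)) \<le> 2 * q ^ n" for n
      unfolding A_def q_def using Hoeffding_bounded_iid_geometric[OF indep ident bounded e] by simp
    ultimately have "summable (\<lambda>n. measure M (A n))"
      by (rule summable_comparison_test')
    then have "AE \<omega> in M. eventually (\<lambda>n. \<omega> \<in> space M - A n) sequentially"
      by (intro borel_cantelli_AE1 A) (simp_all add: emeasure_eq_measure)
    then show ?thesis
      by (rule eventually_mono) (auto simp: A_def dist_real_def elim: eventually_mono)
  qed
  have "AE \<omega> in M. \<forall>k. eventually (\<lambda>n. dist ((\<Sum>i<n. Z i \<omega>) / real n) (expectation (Z 0))
      < inverse (real (Suc k))) sequentially"
    unfolding AE_all_countable by (intro allI eventually_close) simp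
  then show ?thesis
    by (rule eventually_mono) (auto intro: tendsto_of_eventually_dist_less_inverse_Suc)
qed

lemma tendsto_euclidean_componentwise:
  fixes f :: "'b \<Rightarrow> 'c::euclidean_space"
  assumes "\<And>b. b \<in> Basis \<Longrightarrow> ((\<lambda>n. f n \<bullet> b) \<longlongrightarrow> l \<bullet> b) F"
  shows "(f \<longlongrightarrow> l) F"
proof -
  have "((\<lambda>n. \<Sum>b\<in>Basis. (f n \<bullet> b) *\<^sub>R b) \<longlongrightarrow> (\<Sum>b\<in>Basis. (l \<bullet> b) *\<^sub>R b)) F"
    using assms by (intro tendsto_sum tendsto_scaleR tendsto_const)
  then show ?thesis
    by (simp add: euclidean_representation)
qed

lemma (in prob_space) distr_eqD:
  assumes "X \<in> measurable M N" and "distr M N X = F"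
  shows "prob_space F" and "sets F = sets N"
  using prob_space_distr[OF assms(1)] sets_distr[of M N X] assms(2) by simp_all

lemma (in prob_space) strong_law_bounded_function:
  fixes X :: "nat \<Rightarrow> 'a \<Rightarrow> 'b" and g :: "'b \<Rightarrow> 'c::euclidean_space"
  assumes indep: "indep_vars (\<lambda>_. N) X UNIV"
    and ident: "\<And>i. distr M N (X i) = F"
    and g: "g \<in> borel_measurable N"
    and bounded: "\<And>x. norm (g x) \<le> B"
  shows "AE \<omega> in M. (\<lambda>n. (1 / real n) *\<^sub>R (\<Sum>i<n. g (X i \<omega>))) \<longlonglongrightarrow> (\<integral>x. g x \<partial>F)"
proof -
  have X [measurable]: "X i \<in> measurable M N" for i
    using indep by (simp add: indep_vars_def)
  interpret F: prob_space F
    using distr_eqD[OF X ident] by simp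
  have sets_F: "sets F = sets N"
    using distr_eqD[OF X ident] by simp
  have "integrable F g"
    by (rule F.integrable_const_bound[where B = B]) (use g bounded sets_F in auto)
  have component: "AE \<omega> in M. (\<lambda>n. (\<Sum>i<n. g (X i \<omega>) \<bullet> b) / real n) \<longlonglongrightarrow> (\<integral>x. g x \<partial>F) \<bullet> b"
    if b: "b \<in> Basis" for b
  proof -
    define Z where "Z i \<omega> = g (X i \<omega>) \<bullet> b" for i \<omega>
    have gb [measurable]: "(\<lambda>x. g x \<bullet> b) \<in> borel_measurable N"
      using g by measurable
    have "indep_vars (\<lambda>_. borel) Z UNIV"
      unfolding Z_def by (rule indep_vars_compose2[OF indep gb])
    moreover have "distr M borel (Z i) = distr F borel (\<lambda>x. g x \<bullet> b)" for i
      unfolding Z_def ident[of i, symmetric] by (simp add: distr_distr comp_def)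
    moreover have "\<bar>Z i \<omega>\<bar> \<le> B" for i \<omega>
      unfolding Z_def using Basis_le_norm[OF b, of "g (X i \<omega>)"] bounded[of "X i \<omega>"] by simp
    ultimately have "AE \<omega> in M. (\<lambda>n. (\<Sum>i<n. Z i \<omega>) / real n) \<longlonglongrightarrow> expectation (Z 0)"
      by (intro strong_law_bounded_iid) simp_all
    moreover have "expectation (Z 0) = (\<integral>x. g x \<partial>F) \<bullet> b"
      using integral_distr[OF X gb, of 0] \<open>integrable F g\<close> by (simp add: Z_def[abs_def] ident)
    ultimately show ?thesis
      by (simp add: Z_def)
  qed
  have "AE \<omega> in M. \<forall>b\<in>Basis. (\<lambda>n. (\<Sum>i<n. g (X i \<omega>) \<bullet> b) / real n) \<longlonglongrightarrow> (\<integral>x. g x \<partial>F) \<bullet> b"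
    by (intro AE_finite_allI component) simp
  then show ?thesis
  proof (rule eventually_mono)
    fix \<omega>
    assume lim: "\<forall>b\<in>Basis. (\<lambda>n. (\<Sum>i<n. g (X i \<omega>) \<bullet> b) / real n) \<longlonglongrightarrow> (\<integral>x. g x \<partial>F) \<bullet> b"
    have average_inner: "((1 / real n) *\<^sub>R (\<Sum>i<n. g (X i \<omega>))) \<bullet> b = (\<Sum>i<n. g (X i \<omega>) \<bullet> b) / real n"
      for n b
      by (simp add: inner_sum_left)
    show "(\<lambda>n. (1 / real n) *\<^sub>R (\<Sum>i<n. g (X i \<omega>))) \<longlonglongrightarrow> (\<integral>x. g x \<partial>F)"
      by (rule tendsto_euclidean_componentwise) (use lim in \<open>simp only: average_inner\<close>)
  qed
qed

lemma spatial_sign_eq_sgn: "spatial_sign = sgn"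
  by (rule ext) (simp add: spatial_sign_def sgn_div_norm)

lemma borel_measurable_spatial_sign [measurable]: "spatial_sign \<in> borel_measurable borel"
  unfolding spatial_sign_eq_sgn by measurable

lemma norm_spatial_sign_le: "norm (spatial_sign x) \<le> 1"
  unfolding spatial_sign_eq_sgn by (simp add: norm_sgn)

lemma norm_spatial_sign_diff_le:
  fixes a b :: "real^'p"
  assumes "b \<noteq> 0"
  shows "norm (spatial_sign a - spatial_sign b) \<le> 2 * norm (a - b) / norm b"
proof (cases "a = 0")
  case True
  then show ?thesis
    using assms by (simp add: spatial_sign_def)
next
  case False
  have na: "norm a > 0" and nb: "norm b > 0"
    using False assms by auto
  have "spatial_sign a - spatial_sign b
      = (inverse (norm a) - inverse (norm b)) *\<^sub>R a + inverse (norm b) *\<^sub>R (a - b)"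
    using False assms by (simp add: spatial_sign_def scaleR_diff_left scaleR_diff_right)
  also have "norm \<dots> \<le> \<bar>inverse (norm a) - inverse (norm b)\<bar> * norm a + norm (a - b) / norm b"
    by (rule order_trans[OF norm_triangle_ineq]) (simp add: divide_inverse mult.commute)
  also have "\<bar>inverse (norm a) - inverse (norm b)\<bar> * norm a = \<bar>norm b - norm a\<bar> / norm b"
    using na nb by (simp add: field_simps abs_divide)
  also have "\<dots> \<le> norm (a - b) / norm b"
    using norm_triangle_ineq3[of b a] nb by (simp add: divide_right_mono norm_minus_commute)
  finally show ?thesis
    by simp
qed

lemma outer_row: "outer v w $ i = v $ i *\<^sub>R w"
  by (simp add: outer_def vec_eq_iff)

lemma norm_outer: "norm (outer v w) = norm v * norm w"
proof -
  have "norm (outer v w) = L2_set (\<lambda>i. \<bar>v $ i\<bar> * norm w) UNIV"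
    unfolding norm_vec_def[of "outer v w"] by (simp add: outer_row)
  also have "\<dots> = L2_set (\<lambda>i. \<bar>v $ i\<bar>) UNIV * norm w"
    by (simp add: L2_set_left_distrib)
  finally show ?thesis
    by (simp add: norm_vec_def[of v])
qed

lemma outer_diff_left: "outer (v - v') w = outer v w - outer v' w"
  by (simp add: outer_def vec_eq_iff algebra_simps)

lemma outer_diff_right: "outer v (w - w') = outer v w - outer v w'"
  by (simp add: outer_def vec_eq_iff algebra_simps)

lemma borel_measurable_outer [measurable (raw)]:
  fixes f :: "'a \<Rightarrow> real^'p"
  assumes "f \<in> borel_measurable M"
  shows "(\<lambda>x. outer (f x) (f x)) \<in> borel_measurable M"
proof -
  have "(\<lambda>v. outer v v :: real^'p^'p) \<in> borel_measurable borel"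
    unfolding outer_def by (intro borel_measurable_continuous_onI continuous_intros)
  from measurable_compose[OF assms this] show ?thesis
    by simp
qed

abbreviation sign_outer :: "real^'p \<Rightarrow> real^'p^'p" where
  "sign_outer v \<equiv> outer (spatial_sign v) (spatial_sign v)"

lemma norm_sign_outer_le: "norm (sign_outer v) \<le> 1"
  unfolding norm_outer using norm_spatial_sign_le[of v] by (simp add: mult_le_one)

lemma norm_sign_outer_diff_le:
  "norm (sign_outer a - sign_outer b) \<le> 2 * norm (spatial_sign a - spatial_sign b)"
proof -
  have "sign_outer a - sign_outer b
      = outer (spatial_sign a) (spatial_sign a - spatial_sign b)
        + outer (spatial_sign a - spatial_sign b) (spatial_sign b)"
    by (simp add: outer_diff_left outer_diff_right)
  also have "norm \<dots> \<le> norm (spatial_sign a) * norm (spatial_sign a - spatial_sign b)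
      + norm (spatial_sign a - spatial_sign b) * norm (spatial_sign b)"
    by (rule order_trans[OF norm_triangle_ineq]) (simp add: norm_outer)
  also have "\<dots> \<le> 2 * norm (spatial_sign a - spatial_sign b)"
    using mult_left_le_one_le[OF norm_ge_zero norm_ge_zero norm_spatial_sign_le[of a]]
      mult_right_le_one_le[OF norm_ge_zero norm_ge_zero norm_spatial_sign_le[of b]]
    by (simp only: mult_2) (rule add_mono)
  finally show ?thesis .
qed

text \<open>The separate value at \<open>x = t\<close> is needed because \<open>4 * \<delta> / 0 = 0\<close>.\<close>

definition sign_modulus :: "real \<Rightarrow> real^'p \<Rightarrow> real^'p \<Rightarrow> real" where
  "sign_modulus \<delta> t x = (if x = t then 4 else min 4 (4 * \<delta> / norm (x - t)))"

lemma sign_outer_shift_le: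
  assumes "norm (u - t) \<le> \<delta>"
  shows "norm (sign_outer (x - u) - sign_outer (x - t)) \<le> sign_modulus \<delta> t x"
proof -
  have "norm (spatial_sign (x - u) - spatial_sign (x - t)) \<le> 2"
    using norm_triangle_ineq4[of "spatial_sign (x - u)" "spatial_sign (x - t)"] norm_spatial_sign_le[of "x - u"]
      norm_spatial_sign_le[of "x - t"] by linarith
  moreover have "norm (spatial_sign (x - u) - spatial_sign (x - t)) \<le> 2 * \<delta> / norm (x - t)"
    if "x \<noteq> t"
  proof -
    have "norm (spatial_sign (x - u) - spatial_sign (x - t)) \<le> 2 * norm (u - t) / norm (x - t)"
      using norm_spatial_sign_diff_le[of "x - t" "x - u"] that by (simp add: norm_minus_commute)
    also have "\<dots> \<le> 2 * \<delta> / norm (x - t)"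
      using assms by (simp add: divide_right_mono)
    finally show ?thesis .
  qed
  ultimately have "2 * norm (spatial_sign (x - u) - spatial_sign (x - t)) \<le> sign_modulus \<delta> t x"
    by (auto simp: sign_modulus_def)
  with norm_sign_outer_diff_le show ?thesis
    by (rule order_trans)
qed

lemma sign_modulus_nonneg: "\<delta> \<ge> 0 \<Longrightarrow> sign_modulus \<delta> t x \<ge> 0"
  by (simp add: sign_modulus_def)

lemma sign_modulus_le_4: "sign_modulus \<delta> t x \<le> 4"
  by (simp add: sign_modulus_def)

lemma borel_measurable_sign_modulus [measurable]: "sign_modulus \<delta> t \<in> borel_measurable borel"
  unfolding sign_modulus_def by measurable

lemma sign_modulus_tendsto_zero:
  assumes "x \<noteq> t" and "\<delta> \<longlonglongrightarrow> 0"
  shows "(\<lambda>k. sign_modulus (\<delta> k) t x) \<longlonglongrightarrow> 0"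
proof -
  have "(\<lambda>k. min 4 (4 * \<delta> k / norm (x - t))) \<longlonglongrightarrow> min 4 (4 * 0 / norm (x - t))"
    by (intro tendsto_intros assms) (use assms in simp)
  then show ?thesis
    using assms by (simp add: sign_modulus_def)
qed

lemma integral_sign_modulus_tendsto_zero:
  fixes F :: "(real^'p) measure"
  assumes "finite_measure F" and sets_F: "sets F = sets borel"
    and "emeasure F {t} = 0" and "\<delta> \<longlonglongrightarrow> 0" and nonneg: "\<And>k. \<delta> k \<ge> 0"
  shows "(\<lambda>k. \<integral>x. sign_modulus (\<delta> k) t x \<partial>F) \<longlonglongrightarrow> 0"
proof -
  interpret finite_measure F by fact
  have "AE x in F. x \<noteq> t"
    using assms by (intro AE_I[where N = "{t}"]) auto
  then have "AE x in F. (\<lambda>k. sign_modulus (\<delta> k) t x) \<longlonglongrightarrow> 0"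
    by (rule eventually_mono) (use sign_modulus_tendsto_zero assms in blast)
  moreover have "norm (sign_modulus (\<delta> k) t x) \<le> 4" for k x
    using sign_modulus_nonneg[OF nonneg, of k t x] sign_modulus_le_4[of "\<delta> k" t x] by simp
  ultimately have "(\<lambda>k. \<integral>x. sign_modulus (\<delta> k) t x \<partial>F) \<longlonglongrightarrow> (\<integral>x. 0 \<partial>F)"
    by (intro integral_dominated_convergence[where w = "\<lambda>_. 4"])
      (auto simp: measurable_cong_sets[OF sets_F refl])
  then show ?thesis
    by simp
qed

lemma dist_SSCM_n_shift_le:
  assumes "norm (u - t) \<le> \<delta>"
  shows "dist (SSCM_n x n u) (SSCM_n x n t) \<le> (\<Sum>i<n. sign_modulus \<delta> t (x i)) / real n"
proof -
  have "dist (SSCM_n x n u) (SSCM_n x n t)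
      = norm (\<Sum>i<n. sign_outer (x i - u) - sign_outer (x i - t)) / real n"
    by (simp add: SSCM_n_def dist_norm sum_subtractf flip: scaleR_diff_right)
  also have "\<dots> \<le> (\<Sum>i<n. sign_modulus \<delta> t (x i)) / real n"
    by (intro divide_right_mono order_trans[OF norm_sum] sum_mono sign_outer_shift_le assms) simp
  finally show ?thesis .
qed

lemma SSCM_n_tendsto_shifted:
  fixes x u :: "nat \<Rightarrow> real^'p"
  assumes centered: "(\<lambda>n. SSCM_n x n t) \<longlonglongrightarrow> S"
    and modulus: "\<And>k. (\<lambda>n. (\<Sum>i<n. sign_modulus (\<delta> k) t (x i)) / real n) \<longlonglongrightarrow> c k"
    and "c \<longlonglongrightarrow> 0" and "\<And>k. \<delta> k > 0" and "u \<longlonglongrightarrow> t"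
  shows "(\<lambda>n. SSCM_n x n (u n)) \<longlonglongrightarrow> S"
proof (rule tendstoI)
  fix e :: real assume "e > 0"
  then obtain k where "c k < e / 3"
    using order_tendstoD(2)[OF \<open>c \<longlonglongrightarrow> 0\<close>, of "e / 3"] by (auto simp: eventually_sequentially)
  then have "eventually (\<lambda>n. (\<Sum>i<n. sign_modulus (\<delta> k) t (x i)) / real n < 2 * e / 3) sequentially"
    using \<open>e > 0\<close> by (intro order_tendstoD(2)[OF modulus]) simp
  moreover have "eventually (\<lambda>n. dist (SSCM_n x n t) S < e / 3) sequentially"
    using \<open>e > 0\<close> by (intro tendstoD[OF centered]) simp
  moreover have "eventually (\<lambda>n. dist (u n) t < \<delta> k) sequentially"
    using assms(4) by (intro tendstoD[OF \<open>u \<longlonglongrightarrow> t\<close>])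
  ultimately show "eventually (\<lambda>n. dist (SSCM_n x n (u n)) S < e) sequentially"
  proof eventually_elim
    case (elim n)
    have "dist (SSCM_n x n (u n)) (SSCM_n x n t) \<le> (\<Sum>i<n. sign_modulus (\<delta> k) t (x i)) / real n"
      using elim(3) by (intro dist_SSCM_n_shift_le) (simp add: dist_norm)
    with elim(1,2) dist_triangle[of "SSCM_n x n (u n)" S "SSCM_n x n t"] show ?case
      by linarith
  qed
qed

lemma borel_measurable_SSCM_n [measurable (raw)]:
  assumes "\<And>i. X i \<in> borel_measurable M" and "u \<in> borel_measurable M"
  shows "(\<lambda>\<omega>. SSCM_n (\<lambda>i. X i \<omega>) n (u \<omega>)) \<in> borel_measurable M"
  unfolding SSCM_n_def using assms by measurable

lemma (in prob_space) SSCM_n_strongly_consistent_at_center: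
  assumes indep: "indep_vars (\<lambda>_. borel) X UNIV" and distr: "\<And>i. distr M borel (X i) = F"
  shows "AE \<omega> in M. (\<lambda>n. SSCM_n (\<lambda>i. X i \<omega>) n t) \<longlonglongrightarrow> SSCM F t"
  unfolding SSCM_n_def SSCM_def
  by (rule strong_law_bounded_function[OF indep distr _ norm_sign_outer_le]) measurable

lemma (in prob_space) strong_law_sign_modulus:
  fixes \<delta> :: "nat \<Rightarrow> real"
  assumes indep: "indep_vars (\<lambda>_. borel) X UNIV" and distr: "\<And>i. distr M borel (X i) = F"
    and nonneg: "\<And>k. \<delta> k \<ge> 0"
  shows "AE \<omega> in M. \<forall>k. (\<lambda>n. (\<Sum>i<n. sign_modulus (\<delta> k) t (X i \<omega>)) / real n)
           \<longlonglongrightarrow> (\<integral>x. sign_modulus (\<delta> k) t x \<partial>F)"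
proof -
  have "AE \<omega> in M. (\<lambda>n. (\<Sum>i<n. sign_modulus (\<delta> k) t (X i \<omega>)) / real n)
      \<longlonglongrightarrow> (\<integral>x. sign_modulus (\<delta> k) t x \<partial>F)" for k
  proof -
    have "norm (sign_modulus (\<delta> k) t x) \<le> 4" for x
      using sign_modulus_nonneg[OF nonneg, of k t x] sign_modulus_le_4[of "\<delta> k" t x] by simp
    from strong_law_bounded_function[OF indep distr borel_measurable_sign_modulus this]
    show ?thesis
      by simp
  qed
  then show ?thesis
    by (intro AE_all_countable[THEN iffD2] allI)
qed

lemma (in prob_space) SSCM_n_strongly_consistent:
  fixes X tn :: "nat \<Rightarrow> 'a \<Rightarrow> real^'p"
  assumes indep: "indep_vars (\<lambda>_. borel) X UNIV" and distr: "\<And>i. distr M borel (X i) = F"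
    and atom: "emeasure F {t} = 0"
    and tn: "AE \<omega> in M. (\<lambda>n. tn n \<omega>) \<longlonglongrightarrow> t"
  shows "AE \<omega> in M. (\<lambda>n. SSCM_n (\<lambda>i. X i \<omega>) n (tn n \<omega>)) \<longlonglongrightarrow> SSCM F t"
proof -
  define \<delta> where "\<delta> k = inverse (real (Suc k))" for k
  have \<delta>: "\<delta> k > 0" for k
    by (simp add: \<delta>_def)
  then have \<delta>_nonneg: "\<delta> k \<ge> 0" for k
    by (simp add: less_imp_le)
  have "X 0 \<in> borel_measurable M"
    using indep by (simp add: indep_vars_def)
  note F = distr_eqD[OF this distr]
  have modulus_limit: "(\<lambda>k. \<integral>x. sign_modulus (\<delta> k) t x \<partial>F) \<longlonglongrightarrow> 0"
    using \<delta> LIMSEQ_inverse_real_of_nat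
    by (intro integral_sign_modulus_tendsto_zero prob_space.finite_measure F atom)
      (auto simp: \<delta>_def less_imp_le)
  show ?thesis
    using SSCM_n_strongly_consistent_at_center[OF indep distr, where t = t]
      strong_law_sign_modulus[where \<delta> = \<delta> and t = t, OF indep distr \<delta>_nonneg] tn
  proof eventually_elim
    case (elim \<omega>)
    show ?case
      by (rule SSCM_n_tendsto_shifted[OF elim(1) _ modulus_limit \<delta> elim(3)]) (use elim(2) in blast)
  qed
qed

lemma conv_in_probD:
  "conv_in_prob M Y L \<Longrightarrow> e > 0
    \<Longrightarrow> (\<lambda>n. measure M {\<omega> \<in> space M. e < dist (Y n \<omega>) (L \<omega>)}) \<longlonglongrightarrow> 0"
  by (simp add: conv_in_prob_def)

lemma (in prob_space) conv_in_prob_if_AE_tendsto: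
  fixes Y :: "nat \<Rightarrow> 'a \<Rightarrow> 'b::{metric_space, second_countable_topology}"
  assumes [measurable]: "\<And>n. Y n \<in> borel_measurable M"
    and "AE \<omega> in M. (\<lambda>n. Y n \<omega>) \<longlonglongrightarrow> c"
  shows "conv_in_prob M Y (\<lambda>_. c)"
  unfolding conv_in_prob_def
proof (intro allI impI)
  fix e :: real assume "e > 0"
  define A where "A n = {\<omega> \<in> space M. e < dist (Y n \<omega>) c}" for n
  have [measurable]: "A n \<in> events" for n
    unfolding A_def by measurable
  have "AE \<omega> in M. (\<lambda>n. indicator (A n) \<omega> :: real) \<longlonglongrightarrow> 0"
    using assms(2)
  proof eventually_elim
    case (elim \<omega>)
    have "eventually (\<lambda>n. dist (Y n \<omega>) c < e) sequentially"
      using tendstoD[OF elim \<open>e > 0\<close>] .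
    then have "eventually (\<lambda>n. indicator (A n) \<omega> = (0::real)) sequentially"
      by (rule eventually_mono) (simp add: A_def)
    then show ?case
      by (rule tendsto_eventually)
  qed
  then have "(\<lambda>n. \<integral>\<omega>. indicator (A n) \<omega> \<partial>M) \<longlonglongrightarrow> (\<integral>\<omega>. 0 \<partial>M :: real)"
    by (intro integral_dominated_convergence[where w = "\<lambda>_. 1"]) (auto simp: indicator_def)
  then show "(\<lambda>n. prob {\<omega> \<in> space M. e < dist (Y n \<omega>) c}) \<longlonglongrightarrow> 0"
    by (simp add: A_def)
qed

lemma (in finite_measure) measure_tendsto_zero_if_covered:
  assumes cover: "\<And>n. A n \<subseteq> B n \<union> C n \<union> D n"
    and [measurable]: "\<And>n. B n \<in> sets M" "\<And>n. C n \<in> sets M" "\<And>n. D n \<in> sets M"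
    and "(\<lambda>n. measure M (B n)) \<longlonglongrightarrow> 0" "(\<lambda>n. measure M (C n)) \<longlonglongrightarrow> 0"
      "(\<lambda>n. measure M (D n)) \<longlonglongrightarrow> 0"
  shows "(\<lambda>n. measure M (A n)) \<longlonglongrightarrow> 0"
proof (rule tendsto_sandwich[OF always_eventually always_eventually tendsto_const])
  show "(\<lambda>n. measure M (B n) + measure M (C n) + measure M (D n)) \<longlonglongrightarrow> 0"
    using assms(5-7) by (auto intro: tendsto_add_zero)
  show "\<forall>n. measure M (A n) \<le> measure M (B n) + measure M (C n) + measure M (D n)"
  proof
    fix n
    have "measure M (A n) \<le> measure M (B n \<union> C n \<union> D n)"
      by (rule finite_measure_mono[OF cover]) measurable
    also have "\<dots> \<le> measure M (B n \<union> C n) + measure M (D n)"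
      by (rule measure_Un_le) measurable
    also have "measure M (B n \<union> C n) \<le> measure M (B n) + measure M (C n)"
      by (rule measure_Un_le) measurable
    finally show "measure M (A n) \<le> measure M (B n) + measure M (C n) + measure M (D n)"
      by simp
  qed
qed simp

lemma (in prob_space) SSCM_n_consistent_in_prob:
  fixes X tn :: "nat \<Rightarrow> 'a \<Rightarrow> real^'p"
  assumes indep: "indep_vars (\<lambda>_. borel) X UNIV" and distr: "\<And>i. distr M borel (X i) = F"
    and atom: "emeasure F {t} = 0"
    and [measurable]: "\<And>n. tn n \<in> borel_measurable M" and tn: "conv_in_prob M tn (\<lambda>_. t)"
  shows "conv_in_prob M (\<lambda>n \<omega>. SSCM_n (\<lambda>i. X i \<omega>) n (tn n \<omega>)) (\<lambda>_. SSCM F t)"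
  unfolding conv_in_prob_def
proof (intro allI impI)
  fix r :: real assume "r > 0"
  have X [measurable]: "X i \<in> borel_measurable M" for i
    using indep by (simp add: indep_vars_def)
  define \<delta> where "\<delta> k = inverse (real (Suc k))" for k
  define c where "c k = (\<integral>x. sign_modulus (\<delta> k) t x \<partial>F)" for k
  have "c \<longlonglongrightarrow> 0"
    using distr_eqD[OF X distr] atom LIMSEQ_inverse_real_of_nat
    unfolding c_def \<delta>_def
    by (intro integral_sign_modulus_tendsto_zero) (auto simp: prob_space.finite_measure)
  then obtain k where ck: "c k < r / 3"
    using \<open>r > 0\<close> order_tendstoD(2)[of c 0 sequentially "r / 3"] by (auto simp: eventually_sequentially)
  define avg where "avg n \<omega> = (\<Sum>i<n. sign_modulus (\<delta> k) t (X i \<omega>)) / real n" for n \<omega>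
  have cover: "{\<omega> \<in> space M. r < dist (SSCM_n (\<lambda>i. X i \<omega>) n (tn n \<omega>)) (SSCM F t)}
      \<subseteq> {\<omega> \<in> space M. r / 3 < dist (SSCM_n (\<lambda>i. X i \<omega>) n t) (SSCM F t)}
        \<union> {\<omega> \<in> space M. \<delta> k < dist (tn n \<omega>) t}
        \<union> {\<omega> \<in> space M. r / 3 < dist (avg n \<omega>) (c k)}" for n
  proof
    fix \<omega>
    assume "\<omega> \<in> {\<omega> \<in> space M. r < dist (SSCM_n (\<lambda>i. X i \<omega>) n (tn n \<omega>)) (SSCM F t)}"
    then have \<omega>: "\<omega> \<in> space M" and far: "r < dist (SSCM_n (\<lambda>i. X i \<omega>) n (tn n \<omega>)) (SSCM F t)"
      by auto
    show "\<omega> \<in> {\<omega> \<in> space M. r / 3 < dist (SSCM_n (\<lambda>i. X i \<omega>) n t) (SSCM F t)}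
        \<union> {\<omega> \<in> space M. \<delta> k < dist (tn n \<omega>) t}
        \<union> {\<omega> \<in> space M. r / 3 < dist (avg n \<omega>) (c k)}"
    proof (rule ccontr)
      assume "\<not> ?thesis"
      then have centered: "dist (SSCM_n (\<lambda>i. X i \<omega>) n t) (SSCM F t) \<le> r / 3"
        and close: "dist (tn n \<omega>) t \<le> \<delta> k" and average: "dist (avg n \<omega>) (c k) \<le> r / 3"
        using \<omega> by auto
      have "dist (SSCM_n (\<lambda>i. X i \<omega>) n (tn n \<omega>)) (SSCM_n (\<lambda>i. X i \<omega>) n t) \<le> avg n \<omega>"
        unfolding avg_def using close by (intro dist_SSCM_n_shift_le) (simp add: dist_norm)
      moreover have "avg n \<omega> \<le> c k + r / 3"
        using average unfolding dist_real_def by linarith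
      ultimately show False
        using far centered ck
          dist_triangle[of "SSCM_n (\<lambda>i. X i \<omega>) n (tn n \<omega>)" "SSCM F t" "SSCM_n (\<lambda>i. X i \<omega>) n t"]
        by linarith
    qed
  qed
  have centered: "conv_in_prob M (\<lambda>n \<omega>. SSCM_n (\<lambda>i. X i \<omega>) n t) (\<lambda>_. SSCM F t)"
    by (rule conv_in_prob_if_AE_tendsto[OF _ SSCM_n_strongly_consistent_at_center[OF indep distr]])
      measurable
  have "AE \<omega> in M. (\<lambda>n. avg n \<omega>) \<longlonglongrightarrow> c k"
    using strong_law_sign_modulus[where \<delta> = \<delta> and t = t, OF indep distr]
    by (auto simp: avg_def c_def \<delta>_def elim: AE_mp)
  then have average: "conv_in_prob M avg (\<lambda>_. c k)"
    by (rule conv_in_prob_if_AE_tendsto[rotated]) (simp add: avg_def)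
  have "\<delta> k > 0"
    by (simp add: \<delta>_def)
  with \<open>r > 0\<close> conv_in_probD[OF centered, of "r / 3"] conv_in_probD[OF tn, of "\<delta> k"]
    conv_in_probD[OF average, of "r / 3"]
  show "(\<lambda>n. prob {\<omega> \<in> space M. r < dist (SSCM_n (\<lambda>i. X i \<omega>) n (tn n \<omega>)) (SSCM F t)})
      \<longlonglongrightarrow> 0"
    by (intro measure_tendsto_zero_if_covered[OF cover]) (simp_all add: avg_def)
qed

lemma LIMSEQ_real_powr_neg: "\<alpha> > 0 \<Longrightarrow> (\<lambda>n. real n powr (- \<alpha>)) \<longlonglongrightarrow> 0"
  using tendsto_neg_powr[of "- \<alpha>" real sequentially] filterlim_real_sequentially by simp

lemma LIMSEQ_if_powr_scaled_bounded:
  fixes u :: "nat \<Rightarrow> 'b::real_normed_vector"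
  assumes "\<alpha> > 0" and bound: "\<And>n. real n powr \<alpha> * norm (u n - t) \<le> T n" and "convergent T"
  shows "u \<longlonglongrightarrow> t"
proof -
  obtain C where "C > 0" and C: "\<And>n. norm (T n) \<le> C"
    using BseqE[OF convergent_imp_Bseq[OF \<open>convergent T\<close>]] by metis
  have upper_null: "(\<lambda>n. C * real n powr (- \<alpha>)) \<longlonglongrightarrow> 0"
    using tendsto_mult[OF tendsto_const LIMSEQ_real_powr_neg[OF \<open>\<alpha> > 0\<close>]] by simp
  have "eventually (\<lambda>n. norm (u n - t) \<le> C * real n powr (- \<alpha>)) sequentially"
    using eventually_gt_at_top[of 0]
  proof eventually_elim
    case (elim n)
    have "real n powr \<alpha> * norm (u n - t) \<le> C"
      using bound[of n] C[of n] by simp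
    moreover have "real n powr \<alpha> > 0"
      using elim by simp
    ultimately have "norm (u n - t) \<le> C / real n powr \<alpha>"
      by (simp add: pos_le_divide_eq mult.commute)
    then show ?case
      by (simp add: powr_minus divide_inverse)
  qed
  then have "(\<lambda>n. u n - t) \<longlonglongrightarrow> 0"
    using upper_null by (rule Lim_null_comparison)
  then show ?thesis
    by (rule LIM_zero_cancel)
qed

lemma LIMSEQ_zero_if_eventually_le:
  fixes f :: "nat \<Rightarrow> real"
  assumes "\<And>n. f n \<ge> 0" and "\<And>\<eta>. \<eta> > 0 \<Longrightarrow> eventually (\<lambda>n. f n \<le> \<eta>) sequentially"
  shows "f \<longlonglongrightarrow> 0"
proof (rule tendstoI)
  fix e :: real assume "e > 0"
  from assms(2)[of "e / 2"] \<open>e > 0\<close> show "eventually (\<lambda>n. dist (f n) 0 < e) sequentially"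
    by (auto elim!: eventually_mono simp: abs_of_nonneg[OF assms(1)])
qed

lemma (in prob_space) conv_in_prob_if_powr_scaled_bounded_in_prob:
  fixes Y :: "nat \<Rightarrow> 'a \<Rightarrow> 'b::{real_normed_vector, second_countable_topology}"
  assumes "\<alpha> > 0" and [measurable]: "\<And>n. Y n \<in> borel_measurable M"
    and bounded: "bounded_in_prob M (\<lambda>n \<omega>. real n powr \<alpha> * norm (Y n \<omega> - c))"
  shows "conv_in_prob M Y (\<lambda>_. c)"
  unfolding conv_in_prob_def
proof (intro allI impI)
  fix e :: real assume "e > 0"
  show "(\<lambda>n. prob {\<omega> \<in> space M. e < dist (Y n \<omega>) c}) \<longlonglongrightarrow> 0"
  proof (rule LIMSEQ_zero_if_eventually_le)
    fix \<eta> :: real assume "\<eta> > 0"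
    then obtain K where K: "\<And>n. prob {\<omega> \<in> space M. K < \<bar>real n powr \<alpha> * norm (Y n \<omega> - c)\<bar>} \<le> \<eta>"
      using bounded unfolding bounded_in_prob_def by auto
    have "eventually (\<lambda>n. real n powr (- \<alpha>) < e / (\<bar>K\<bar> + 1)) sequentially"
      using \<open>e > 0\<close> by (intro order_tendstoD(2)[OF LIMSEQ_real_powr_neg[OF \<open>\<alpha> > 0\<close>]]) simp
    then show "eventually (\<lambda>n. prob {\<omega> \<in> space M. e < dist (Y n \<omega>) c} \<le> \<eta>) sequentially"
      using eventually_gt_at_top[of 0]
    proof eventually_elim
      case (elim n)
      have pos: "real n powr \<alpha> > 0"
        using elim(2) by simp
      have K_less: "\<bar>K\<bar> + 1 < e * real n powr \<alpha>"
        using elim(1) pos by (simp add: powr_minus field_simps)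
      have "{\<omega> \<in> space M. e < dist (Y n \<omega>) c}
          \<subseteq> {\<omega> \<in> space M. K < \<bar>real n powr \<alpha> * norm (Y n \<omega> - c)\<bar>}"
      proof safe
        fix \<omega> assume "e < dist (Y n \<omega>) c"
        then have "e * real n powr \<alpha> < real n powr \<alpha> * norm (Y n \<omega> - c)"
          using pos by (simp add: dist_norm mult.commute)
        moreover have "\<bar>real n powr \<alpha> * norm (Y n \<omega> - c)\<bar> = real n powr \<alpha> * norm (Y n \<omega> - c)"
          using pos by simp
        ultimately show "K < \<bar>real n powr \<alpha> * norm (Y n \<omega> - c)\<bar>"
          using K_less by linarith
      qed
      then have "prob {\<omega> \<in> space M. e < dist (Y n \<omega>) c}
          \<le> prob {\<omega> \<in> space M. K < \<bar>real n powr \<alpha> * norm (Y n \<omega> - c)\<bar>}"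
        by (rule finite_measure_mono) measurable
      with K[of n] show ?case
        by simp
    qed
  qed simp
qed

lemma AE_tendsto_if_rate_condition:
  fixes tn :: "nat \<Rightarrow> 'a \<Rightarrow> 'b::real_normed_vector"
  assumes "\<alpha> \<ge> 0" and bound: "AE \<omega> in M. \<forall>n. real n powr \<alpha> * norm (tn n \<omega> - t) \<le> T n \<omega>"
    and rate: "if \<alpha> > 0 then AE \<omega> in M. convergent (\<lambda>n. T n \<omega>) else AE \<omega> in M. (\<lambda>n. T n \<omega>) \<longlonglongrightarrow> 0"
  shows "AE \<omega> in M. (\<lambda>n. tn n \<omega>) \<longlonglongrightarrow> t"
proof (cases "\<alpha> > 0")
  case True
  with rate have "AE \<omega> in M. convergent (\<lambda>n. T n \<omega>)"
    by simp
  with bound show ?thesis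
  proof eventually_elim
    case (elim \<omega>)
    then show ?case
      using LIMSEQ_if_powr_scaled_bounded[OF True, of "\<lambda>n. tn n \<omega>" t "\<lambda>n. T n \<omega>"] by blast
  qed
next
  case False
  with \<open>\<alpha> \<ge> 0\<close> rate have "\<alpha> = 0" and null: "AE \<omega> in M. (\<lambda>n. T n \<omega>) \<longlonglongrightarrow> 0"
    by simp_all
  from bound null show ?thesis
  proof eventually_elim
    case (elim \<omega>)
    have tail: "norm (tn n \<omega> - t) \<le> T n \<omega>" if "n > 0" for n
      using that spec[OF elim(1), of n] \<open>\<alpha> = 0\<close> by simp
    have "eventually (\<lambda>n. norm (tn n \<omega> - t) \<le> T n \<omega>) sequentially"
      using eventually_gt_at_top[of 0] by (rule eventually_mono) (rule tail)
    then have "(\<lambda>n. tn n \<omega> - t) \<longlonglongrightarrow> 0"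
      using elim(2) by (rule Lim_null_comparison)
    then show ?case
      by (rule LIM_zero_cancel)
  qed
qed

lemma (in prob_space) conv_in_prob_if_rate_condition:
  fixes tn :: "nat \<Rightarrow> 'a \<Rightarrow> 'b::{real_normed_vector, second_countable_topology}"
  assumes "\<alpha> \<ge> 0" and [measurable]: "\<And>n. tn n \<in> borel_measurable M"
    and rate: "if \<alpha> > 0 then bounded_in_prob M (\<lambda>n \<omega>. real n powr \<alpha> * norm (tn n \<omega> - t))
      else conv_in_prob M (\<lambda>n \<omega>. real n powr \<alpha> * norm (tn n \<omega> - t)) (\<lambda>_. 0)"
  shows "conv_in_prob M tn (\<lambda>_. t)"
proof (cases "\<alpha> > 0")
  case True
  with rate show ?thesis
    by (intro conv_in_prob_if_powr_scaled_bounded_in_prob[OF True]) simp_all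
next
  case False
  with \<open>\<alpha> \<ge> 0\<close> rate have "\<alpha> = 0"
    and null: "conv_in_prob M (\<lambda>n \<omega>. real n powr 0 * norm (tn n \<omega> - t)) (\<lambda>_. 0)"
    by simp_all
  show ?thesis
    unfolding conv_in_prob_def
  proof (intro allI impI)
    fix e :: real assume "e > 0"
    have "eventually (\<lambda>n. measure M {\<omega> \<in> space M. e < dist (real n powr 0 * norm (tn n \<omega> - t)) 0}
        = measure M {\<omega> \<in> space M. e < dist (tn n \<omega>) t}) sequentially"
      using eventually_gt_at_top[of "0::nat"] by eventually_elim (simp add: dist_norm)
    with conv_in_probD[OF null \<open>e > 0\<close>]
    show "(\<lambda>n. measure M {\<omega> \<in> space M. e < dist (tn n \<omega>) t}) \<longlonglongrightarrow> 0"
      by (rule Lim_transform_eventually)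
  qed
qed

lemma emeasure_singleton_eq_0_if_nn_integral_finite:
  assumes "{t} \<in> sets F" and "(\<integral>\<^sup>+x. (if x = t then \<infinity> else f x) \<partial>F) < \<infinity>"
  shows "emeasure F {t} = 0"
proof (rule ccontr)
  assume "emeasure F {t} \<noteq> 0"
  then have "\<infinity> = \<infinity> * emeasure F {t}"
    by (simp add: ennreal_mult_eq_top_iff)
  also have "\<dots> = (\<integral>\<^sup>+x. \<infinity> * indicator {t} x \<partial>F)"
    using assms(1) by (rule nn_integral_cmult_indicator[symmetric])
  also have "\<dots> \<le> (\<integral>\<^sup>+x. (if x = t then \<infinity> else f x) \<partial>F)"
    by (intro nn_integral_mono) (simp add: indicator_def)
  finally show False
    using assms(2) by simp
qed

theorem theorem1:
  fixes M :: "'a measure"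
    and F :: "(real^'p) measure"
    and X :: "nat \<Rightarrow> 'a \<Rightarrow> real^'p"
    and t :: "real^'p"
    and \<alpha> :: real
    and tn :: "nat \<Rightarrow> 'a \<Rightarrow> real^'p"
    and T :: "nat \<Rightarrow> 'a \<Rightarrow> real"
  assumes p2: "CARD('p) \<ge> 2"
    and prob: "prob_space M"
    and indep: "prob_space.indep_vars M (\<lambda>_. borel) X UNIV"
    and distF: "\<And>i. distr M borel (X i) = F"
    and alpha: "\<alpha> \<ge> 0"
    and condI: "(\<integral>\<^sup>+ x. (if x = t then \<infinity> else ennreal (norm (x - t) powr (- 1 / (1 + \<alpha>)))) \<partial>F) < \<infinity>"
    and tn_meas: "\<And>n. tn n \<in> borel_measurable M"
  shows
    "((\<forall>n. T n \<in> borel_measurable M)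
       \<and> (AE \<omega> in M. \<forall>n. real n powr \<alpha> * norm (tn n \<omega> - t) \<le> T n \<omega>)
       \<and> (if \<alpha> > 0 then (AE \<omega> in M. convergent (\<lambda>n. T n \<omega>))
          else (AE \<omega> in M. (\<lambda>n. T n \<omega>) \<longlonglongrightarrow> 0))
       \<longrightarrow> (AE \<omega> in M. (\<lambda>n. SSCM_n (\<lambda>i. X i \<omega>) n (tn n \<omega>)) \<longlonglongrightarrow> SSCM F t))
     \<and>
     ((if \<alpha> > 0 then bounded_in_prob M (\<lambda>n \<omega>. real n powr \<alpha> * norm (tn n \<omega> - t))
       else conv_in_prob M (\<lambda>n \<omega>. real n powr \<alpha> * norm (tn n \<omega> - t)) (\<lambda>_. 0))
       \<longrightarrow> conv_in_prob M (\<lambda>n \<omega>. SSCM_n (\<lambda>i. X i \<omega>) n (tn n \<omega>)) (\<lambda>_. SSCM F t))"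
proof -
  interpret prob_space M
    by (rule prob)
  have "X 0 \<in> borel_measurable M"
    using indep by (simp add: indep_vars_def)
  then have "{t} \<in> sets F"
    using distr_eqD(2)[OF _ distF] by simp
  \<comment> \<open>Condition (I) enters only through \<open>F {t} = 0\<close>.\<close>
  then have atom: "emeasure F {t} = 0"
    using condI by (rule emeasure_singleton_eq_0_if_nn_integral_finite)
  show ?thesis
    using AE_tendsto_if_rate_condition[where M = M and tn = tn and t = t and T = T, OF alpha]
      conv_in_prob_if_rate_condition[where tn = tn and t = t, OF alpha tn_meas]
      SSCM_n_strongly_consistent[where tn = tn, OF indep distF atom]
      SSCM_n_consistent_in_prob[where tn = tn, OF indep distF atom tn_meas]
    by blast
qed

end
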